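(* Let $(E,\mathcal{E},\mu)$, the exchangeable pair $(X,X')$, $L$ and $\Gamma$ be as in the context, and let $F\in L^4(\mu)$. Then \[\mathbb{E}\bigl[(F(X')-F(X))^4\bigr]=4\Bigl(E_\mu[F^3\,LF]+3E_\mu[F^2\Gamma(F,F)]\Bigr)=4\Bigl(3E_\mu[F^2\Gamma(F,F)]-E_\mu[\Gamma(F^3,F)]\Bigr).\] If moreover $F$ is an eigenfunction of $-L$ with eigenvalue $\lambda>0$ (i.e. $LF=-\lambda F$), then \[\mathbb{E}\bigl[(F(X')-F(X))^4\bigr]=4\lambda\Bigl(3E_\mu\bigl[F^2\lambda^{-1}\Gamma(F,F)\bigr]-E_\mu[F^4]\Bigr).\]
   Context: $(E,\mathcal{E},\mu)$ is a probability space; $(X,X')$ is an exchangeable pair (i.e. $(X,X')\overset{d}{=}(X',X)$) of $E$-valued random variables on $(\Omega,\mathcal{F},\mathbb{P})$ with $\mathbb{P}\circ X^{-1}=\mu$, admitting a regular conditional distribution of $X'$ given $X$. $LF(x):=\mathbb{E}[F(X')-F(X)\mid X=x]$ (defined on $L^1(\mu)$ and $L^2(\mu)$), $\Gamma(F,G):=\frac12(L(FG)-F\,LG-G\,LF)$; $E_\mu$ is expectation under $\mu$. *)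

theory Defs
  imports "HOL-Probability.Probability"
begin

text \<open>The Markov kernel K is a regular conditional distribution of X' given X = x.
  The generator: L F x = E[F(X') - F(X) | X = x] = integral of (F y - F x) over K x.\<close>
definition Lgen :: "('a \<Rightarrow> 'a measure) \<Rightarrow> ('a \<Rightarrow> real) \<Rightarrow> 'a \<Rightarrow> real" where
  "Lgen K F x = (\<integral>y. (F y - F x) \<partial>(K x))"

definition Gam :: "('a \<Rightarrow> 'a measure) \<Rightarrow> ('a \<Rightarrow> real) \<Rightarrow> ('a \<Rightarrow> real) \<Rightarrow> 'a \<Rightarrow> real" where
  "Gam K F G x = (Lgen K (\<lambda>y. F y * G y) x - F x * Lgen K G x - G x * Lgen K F x) / 2"

end

theory Submission
  imports Defs
begin

(*
  Write a = F(X) and b = F(X'). Disintegrating the law of (X, X') along the kernel K turns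
  E_mu[phi LF] into E[phi(X) (b - a)] and E_mu[phi Gamma(F, G)] into
  E[phi(X) (b - a) (G(X') - G(X))] / 2, since 2 Gamma(F, G)(x) is the conditional expectation
  of the product of the increments of F and G given X = x. Hence every expression in the theorem
  is a linear combination of the mixed moments E[a^i b^j] with i + j = 4, which are finite
  because F is in L^4. Exchangeability makes these moments symmetric in (i, j), and modulo this
  symmetry all expressions reduce to E[(b - a)^4] = 2 E[a^4] - 8 E[a^3 b] + 6 E[a^2 b^2].
*)

lemma abs_power_le_one_plus_abs_power:
  fixes a :: real
  assumes "k \<le> n"
  shows "\<bar>a\<bar> ^ k \<le> 1 + \<bar>a\<bar> ^ n"
proof (cases "\<bar>a\<bar> \<le> 1")
  case True
  then have "\<bar>a\<bar> ^ k \<le> 1" by (simp add: power_le_one)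
  then show ?thesis by (simp add: add_increasing2)
next
  case False
  then have "\<bar>a\<bar> ^ k \<le> \<bar>a\<bar> ^ n" by (intro power_increasing assms) auto
  then show ?thesis by simp
qed

lemma abs_mult_power_le_sum_power:
  fixes a b :: real
  assumes "i + j = n"
  shows "\<bar>a ^ i * b ^ j\<bar> \<le> \<bar>a\<bar> ^ n + \<bar>b\<bar> ^ n"
proof -
  define c where "c = max \<bar>a\<bar> \<bar>b\<bar>"
  have "\<bar>a ^ i * b ^ j\<bar> = \<bar>a\<bar> ^ i * \<bar>b\<bar> ^ j" by (simp add: abs_mult power_abs)
  also have "\<dots> \<le> c ^ i * c ^ j" by (intro mult_mono power_mono) (auto simp: c_def)
  also have "\<dots> = c ^ n" by (metis assms power_add)
  also have "\<dots> \<le> \<bar>a\<bar> ^ n + \<bar>b\<bar> ^ n" by (simp add: c_def max_def)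
  finally show ?thesis .
qed

lemma (in finite_measure) integrable_power_le:
  fixes f :: "'a \<Rightarrow> real"
  assumes [measurable]: "f \<in> borel_measurable M"
    and "integrable M (\<lambda>x. \<bar>f x\<bar> ^ n)" and "k \<le> n"
  shows "integrable M (\<lambda>x. f x ^ k)"
proof (rule Bochner_Integration.integrable_bound)
  show "integrable M (\<lambda>x. 1 + \<bar>f x\<bar> ^ n)" using assms(2) by simp
  show "AE x in M. norm (f x ^ k) \<le> norm (1 + \<bar>f x\<bar> ^ n)"
    using abs_power_le_one_plus_abs_power[OF \<open>k \<le> n\<close>] by (simp add: power_abs)
qed simp

lemma borel_measurable_integrable_bind:
  assumes "N \<in> M \<rightarrow>\<^sub>M subprob_algebra B" and "space M \<noteq> {}" and "integrable (M \<bind> N) g"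
  shows "g \<in> borel_measurable B"
  using borel_measurable_integrable[OF assms(3)] sets_bind[OF sets_kernel[OF assms(1)] assms(2)]
  by (simp cong: measurable_cong_sets)

lemma integrable_bind_kernelD:
  fixes g :: "'b \<Rightarrow> real"
  assumes N[measurable]: "N \<in> M \<rightarrow>\<^sub>M subprob_algebra B" and "space M \<noteq> {}"
    and g: "integrable (M \<bind> N) g"
  shows "AE x in M. integrable (N x) g" "integrable M (\<lambda>x. \<integral>y. g y \<partial>N x)"
proof -
  have [measurable]: "g \<in> borel_measurable B"
    using assms by (rule borel_measurable_integrable_bind)
  have "(\<integral>\<^sup>+x. \<integral>\<^sup>+y. norm (g y) \<partial>N x \<partial>M) = (\<integral>\<^sup>+y. norm (g y) \<partial>(M \<bind> N))"
    by (rule nn_integral_bind[symmetric]) measurable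
  also have "\<dots> < \<infinity>" using g by (simp add: integrable_iff_bounded)
  finally have fin: "(\<integral>\<^sup>+x. \<integral>\<^sup>+y. norm (g y) \<partial>N x \<partial>M) < \<infinity>" .
  then have "AE x in M. (\<integral>\<^sup>+y. norm (g y) \<partial>N x) \<noteq> \<infinity>"
    by (intro nn_integral_PInf_AE) auto
  then show "AE x in M. integrable (N x) g"
    using AE_space by eventually_elim
      (auto simp: integrable_iff_bounded less_top measurable_cong_sets[OF sets_kernel[OF N]])
  then have "(\<integral>\<^sup>+x. norm (\<integral>y. g y \<partial>N x) \<partial>M) \<le> (\<integral>\<^sup>+x. \<integral>\<^sup>+y. norm (g y) \<partial>N x \<partial>M)"
    by (intro nn_integral_mono_AE) (auto elim!: eventually_mono dest: integral_norm_bound_ennreal)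
  with fin show "integrable M (\<lambda>x. \<integral>y. g y \<partial>N x)"
    by (auto simp: integrable_iff_bounded)
qed

lemma integral_bind_kernel_nonneg:
  fixes g :: "'b \<Rightarrow> real"
  assumes N[measurable]: "N \<in> M \<rightarrow>\<^sub>M subprob_algebra B" and "space M \<noteq> {}"
    and g: "integrable (M \<bind> N) g" and nonneg: "\<And>y. 0 \<le> g y"
  shows "(\<integral>y. g y \<partial>(M \<bind> N)) = (\<integral>x. \<integral>y. g y \<partial>N x \<partial>M)"
proof -
  have [measurable]: "g \<in> borel_measurable B"
    using N \<open>space M \<noteq> {}\<close> g by (rule borel_measurable_integrable_bind)
  have "(\<integral>y. g y \<partial>(M \<bind> N)) = enn2real (\<integral>\<^sup>+y. g y \<partial>(M \<bind> N))"
    using g by (intro integral_eq_nn_integral) (auto simp: nonneg)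
  also have "\<dots> = enn2real (\<integral>\<^sup>+x. \<integral>\<^sup>+y. g y \<partial>N x \<partial>M)"
    by (simp add: nn_integral_bind[OF _ N])
  also have "\<dots> = enn2real (\<integral>\<^sup>+x. ennreal (\<integral>y. g y \<partial>N x) \<partial>M)"
    using integrable_bind_kernelD(1)[OF N \<open>space M \<noteq> {}\<close> g]
    by (intro arg_cong[where f=enn2real] nn_integral_cong_AE)
      (auto elim!: eventually_mono simp: nn_integral_eq_integral nonneg)
  also have "\<dots> = (\<integral>x. \<integral>y. g y \<partial>N x \<partial>M)"
    by (intro integral_eq_nn_integral[symmetric]) (auto simp: nonneg)
  finally show ?thesis .
qed

lemma integral_bind_kernel:
  fixes g :: "'b \<Rightarrow> real"
  assumes N[measurable]: "N \<in> M \<rightarrow>\<^sub>M subprob_algebra B" and M: "space M \<noteq> {}"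
    and g: "integrable (M \<bind> N) g"
  shows "(\<integral>y. g y \<partial>(M \<bind> N)) = (\<integral>x. \<integral>y. g y \<partial>N x \<partial>M)"
proof -
  have [measurable]: "g \<in> borel_measurable B"
    using N M g by (rule borel_measurable_integrable_bind)
  define gp gn where "gp = (\<lambda>y. max (g y) 0)" and "gn = (\<lambda>y. max (- g y) 0)"
  have [measurable]: "gp \<in> borel_measurable B" "gn \<in> borel_measurable B"
    unfolding gp_def gn_def by measurable
  have g_eq: "g = (\<lambda>y. gp y - gn y)" by (auto simp: gp_def gn_def fun_eq_iff)
  have int: "integrable (M \<bind> N) gp" "integrable (M \<bind> N) gn"
    using g unfolding gp_def gn_def by auto
  note Dp = integrable_bind_kernelD[OF N M int(1)] and Dn = integrable_bind_kernelD[OF N M int(2)]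
  have "(\<integral>y. g y \<partial>(M \<bind> N)) = (\<integral>y. gp y \<partial>(M \<bind> N)) - (\<integral>y. gn y \<partial>(M \<bind> N))"
    using int by (simp add: g_eq)
  also have "\<dots> = (\<integral>x. \<integral>y. gp y \<partial>N x \<partial>M) - (\<integral>x. \<integral>y. gn y \<partial>N x \<partial>M)"
    using int by (intro arg_cong2[where f=minus] integral_bind_kernel_nonneg[OF N M])
      (auto simp: gp_def gn_def)
  also have "\<dots> = (\<integral>x. (\<integral>y. gp y \<partial>N x) - (\<integral>y. gn y \<partial>N x) \<partial>M)"
    using Dp(2) Dn(2) by simp
  also have "\<dots> = (\<integral>x. \<integral>y. g y \<partial>N x \<partial>M)"
    using Dp(1) Dn(1) by (intro integral_cong_AE) (measurable, auto simp: g_eq)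
  finally show ?thesis .
qed

lemma bind_return_Pair_eq_distr:
  assumes K: "K \<in> M \<rightarrow>\<^sub>M subprob_algebra M'" and x: "x \<in> space M"
  shows "K x \<bind> (\<lambda>y. return (M \<Otimes>\<^sub>M M') (x, y)) = distr (K x) (M \<Otimes>\<^sub>M M') (Pair x)"
proof (rule bind_return_distr')
  show "space (K x) \<noteq> {}"
    using subprob_space_kernel[OF K x] by (rule subprob_space.subprob_not_empty)
  show "Pair x \<in> K x \<rightarrow>\<^sub>M M \<Otimes>\<^sub>M M'"
    using x by (simp add: measurable_cong_sets[OF sets_kernel[OF K x] refl])
qed

lemma measurable_bind_return_Pair:
  assumes [measurable]: "K \<in> M \<rightarrow>\<^sub>M subprob_algebra M'"
  shows "(\<lambda>x. K x \<bind> (\<lambda>y. return (M \<Otimes>\<^sub>M M') (x, y))) \<in> M \<rightarrow>\<^sub>M subprob_algebra (M \<Otimes>\<^sub>M M')"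
  by measurable

lemma
  fixes g :: "'a \<times> 'b \<Rightarrow> real"
  assumes K: "K \<in> M \<rightarrow>\<^sub>M subprob_algebra M'" and x: "x \<in> space M"
    and g: "g \<in> borel_measurable (M \<Otimes>\<^sub>M M')"
  shows integrable_bind_return_Pair:
      "integrable (K x \<bind> (\<lambda>y. return (M \<Otimes>\<^sub>M M') (x, y))) g
        \<longleftrightarrow> integrable (K x) (\<lambda>y. g (x, y))"
    and integral_bind_return_Pair:
      "(\<integral>z. g z \<partial>(K x \<bind> (\<lambda>y. return (M \<Otimes>\<^sub>M M') (x, y)))) = (\<integral>y. g (x, y) \<partial>K x)"
proof -
  have "Pair x \<in> K x \<rightarrow>\<^sub>M M \<Otimes>\<^sub>M M'"
    using x by (simp add: measurable_cong_sets[OF sets_kernel[OF K x] refl])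
  then show "integrable (K x \<bind> (\<lambda>y. return (M \<Otimes>\<^sub>M M') (x, y))) g
      \<longleftrightarrow> integrable (K x) (\<lambda>y. g (x, y))"
    and "(\<integral>z. g z \<partial>(K x \<bind> (\<lambda>y. return (M \<Otimes>\<^sub>M M') (x, y)))) = (\<integral>y. g (x, y) \<partial>K x)"
    using integrable_distr_eq[OF _ g] integral_distr[OF _ g]
    by (simp_all add: bind_return_Pair_eq_distr[OF K x])
qed

lemma borel_measurable_integral_kernel:
  fixes g :: "'a \<times> 'b \<Rightarrow> real"
  assumes K: "K \<in> M \<rightarrow>\<^sub>M subprob_algebra M'" and g: "g \<in> borel_measurable (M \<Otimes>\<^sub>M M')"
  shows "(\<lambda>x. \<integral>y. g (x, y) \<partial>K x) \<in> borel_measurable M"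
proof -
  have "(\<lambda>x. \<integral>z. g z \<partial>(K x \<bind> (\<lambda>y. return (M \<Otimes>\<^sub>M M') (x, y)))) \<in> borel_measurable M"
    using measurable_bind_return_Pair[OF K] g by measurable
  then show ?thesis
    by (simp cong: measurable_cong add: integral_bind_return_Pair[OF K _ g])
qed

lemma
  fixes g :: "'a \<times> 'b \<Rightarrow> real"
  assumes K: "K \<in> M \<rightarrow>\<^sub>M subprob_algebra M'" and M: "space M \<noteq> {}"
    and g: "integrable (M \<bind> (\<lambda>x. K x \<bind> (\<lambda>y. return (M \<Otimes>\<^sub>M M') (x, y)))) g"
  shows AE_integrable_bind_Pair: "AE x in M. integrable (K x) (\<lambda>y. g (x, y))"
    and integral_bind_Pair:
      "(\<integral>z. g z \<partial>(M \<bind> (\<lambda>x. K x \<bind> (\<lambda>y. return (M \<Otimes>\<^sub>M M') (x, y)))))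
        = (\<integral>x. \<integral>y. g (x, y) \<partial>K x \<partial>M)"
proof -
  note N = measurable_bind_return_Pair[OF K]
  have g_meas: "g \<in> borel_measurable (M \<Otimes>\<^sub>M M')"
    using N M g by (rule borel_measurable_integrable_bind)
  show "AE x in M. integrable (K x) (\<lambda>y. g (x, y))"
    using integrable_bind_kernelD(1)[OF N M g] AE_space
    by eventually_elim (simp add: integrable_bind_return_Pair[OF K _ g_meas])
  show "(\<integral>z. g z \<partial>(M \<bind> (\<lambda>x. K x \<bind> (\<lambda>y. return (M \<Otimes>\<^sub>M M') (x, y)))))
        = (\<integral>x. \<integral>y. g (x, y) \<partial>K x \<partial>M)"
    unfolding integral_bind_kernel[OF N M g]
    by (rule Bochner_Integration.integral_cong)
      (simp_all add: integral_bind_return_Pair[OF K _ g_meas])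
qed

lemma measurable_Lgen:
  assumes "K \<in> M \<rightarrow>\<^sub>M subprob_algebra M" and "h \<in> borel_measurable M"
  shows "Lgen K h \<in> borel_measurable M"
  using borel_measurable_integral_kernel[OF assms(1), of "\<lambda>z. h (snd z) - h (fst z)"] assms(2)
  by (simp add: Lgen_def[abs_def])

lemma measurable_Gam:
  assumes "K \<in> M \<rightarrow>\<^sub>M subprob_algebra M" and "f \<in> borel_measurable M" "g \<in> borel_measurable M"
  shows "Gam K f g \<in> borel_measurable M"
proof -
  have [measurable]: "Lgen K f \<in> borel_measurable M" "Lgen K g \<in> borel_measurable M"
      "Lgen K (\<lambda>y. f y * g y) \<in> borel_measurable M"
    using assms by (auto intro!: measurable_Lgen)
  show ?thesis
    unfolding Gam_def[abs_def] using assms by measurable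
qed

lemma Gam_eq_integral_increments:
  assumes "prob_space (K x)"
    and "integrable (K x) f" "integrable (K x) g" "integrable (K x) (\<lambda>y. f y * g y)"
  shows "Gam K f g x = (\<integral>y. (f y - f x) * (g y - g x) \<partial>K x) / 2"
proof -
  interpret prob_space "K x" by fact
  have "(\<lambda>y. (f y - f x) * (g y - g x))
      = (\<lambda>y. (f y * g y - f x * g x) - f x * (g y - g x) - g x * (f y - f x))"
    by (auto simp: fun_eq_iff algebra_simps)
  then show ?thesis
    using assms(2-4) by (simp add: Gam_def Lgen_def prob_space)
qed

locale exchangeable_pair = P: prob_space P
  for P :: "'b measure" and M :: "'a measure" and X X' :: "'b \<Rightarrow> 'a" and K :: "'a \<Rightarrow> 'a measure" +
  assumes measurable_X[measurable]: "X \<in> P \<rightarrow>\<^sub>M M"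
    and measurable_X'[measurable]: "X' \<in> P \<rightarrow>\<^sub>M M"
    and distr_X: "distr P M X = M"
    and exchangeable: "distr P (M \<Otimes>\<^sub>M M) (\<lambda>\<omega>. (X \<omega>, X' \<omega>))
      = distr P (M \<Otimes>\<^sub>M M) (\<lambda>\<omega>. (X' \<omega>, X \<omega>))"
    and kernel: "K \<in> M \<rightarrow>\<^sub>M prob_algebra M"
    and joint_eq_bind: "distr P (M \<Otimes>\<^sub>M M) (\<lambda>\<omega>. (X \<omega>, X' \<omega>))
      = M \<bind> (\<lambda>x. K x \<bind> (\<lambda>y. return (M \<Otimes>\<^sub>M M) (x, y)))"
begin

abbreviation joint :: "('a \<times> 'a) measure" where
  "joint \<equiv> distr P (M \<Otimes>\<^sub>M M) (\<lambda>\<omega>. (X \<omega>, X' \<omega>))"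

sublocale M: prob_space M
  using P.prob_space_distr[OF measurable_X] by (simp add: distr_X)

lemma prob_space_kernel: "x \<in> space M \<Longrightarrow> prob_space (K x)"
  using measurable_space[OF kernel] by (simp add: space_prob_algebra)

lemma sets_kernel_eq: "x \<in> space M \<Longrightarrow> sets (K x) = sets M"
  using measurable_space[OF kernel] by (simp add: space_prob_algebra)

lemma distr_joint_swap: "distr joint (M \<Otimes>\<^sub>M M) (\<lambda>z. (snd z, fst z)) = joint"
  by (subst distr_distr) (simp_all add: comp_def exchangeable)

lemma distr_joint_fst: "distr joint M fst = M"
  by (subst distr_distr) (simp_all add: comp_def distr_X)

lemma
  fixes h :: "'a \<times> 'a \<Rightarrow> real"
  assumes [measurable]: "h \<in> borel_measurable (M \<Otimes>\<^sub>M M)"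
  shows integrable_joint_swap: "integrable joint (\<lambda>z. h (snd z, fst z)) \<longleftrightarrow> integrable joint h"
    and integral_joint_swap: "(\<integral>z. h (snd z, fst z) \<partial>joint) = (\<integral>z. h z \<partial>joint)"
  using integrable_distr_eq[of "\<lambda>z. (snd z, fst z)" joint "M \<Otimes>\<^sub>M M" h]
    integral_distr[of "\<lambda>z. (snd z, fst z)" joint "M \<Otimes>\<^sub>M M" h]
  by (simp_all add: distr_joint_swap)

lemma integrable_joint_fst:
  fixes f :: "'a \<Rightarrow> real"
  assumes [measurable]: "f \<in> borel_measurable M"
  shows "integrable joint (\<lambda>z. f (fst z)) \<longleftrightarrow> integrable M f"
  using integrable_distr_eq[of fst joint M f] by (simp add: distr_joint_fst)

lemma
  fixes g :: "'a \<times> 'a \<Rightarrow> real"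
  assumes g: "integrable joint g"
  shows AE_integrable_kernel: "AE x in M. integrable (K x) (\<lambda>y. g (x, y))"
    and integral_joint_disintegration: "(\<integral>z. g z \<partial>joint) = (\<integral>x. \<integral>y. g (x, y) \<partial>K x \<partial>M)"
proof -
  note K = measurable_prob_algebraD[OF kernel] and g' = g[unfolded joint_eq_bind]
  show "AE x in M. integrable (K x) (\<lambda>y. g (x, y))"
    using AE_integrable_bind_Pair[OF K M.not_empty g'] .
  show "(\<integral>z. g z \<partial>joint) = (\<integral>x. \<integral>y. g (x, y) \<partial>K x \<partial>M)"
    unfolding joint_eq_bind using integral_bind_Pair[OF K M.not_empty g'] .
qed

lemma integral_mult_Lgen:
  assumes "integrable joint (\<lambda>z. \<phi> (fst z) * (f (snd z) - f (fst z)))"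
  shows "(\<integral>x. \<phi> x * Lgen K f x \<partial>M) = (\<integral>z. \<phi> (fst z) * (f (snd z) - f (fst z)) \<partial>joint)"
  using integral_joint_disintegration[OF assms] by (simp add: Lgen_def)

lemma integral_mult_Gam:
  assumes [measurable]: "\<phi> \<in> borel_measurable M" "f \<in> borel_measurable M" "g \<in> borel_measurable M"
    and int: "integrable joint (\<lambda>z. \<phi> (fst z) * ((f (snd z) - f (fst z)) * (g (snd z) - g (fst z))))"
    and int_kernel:
      "AE x in M. integrable (K x) f \<and> integrable (K x) g \<and> integrable (K x) (\<lambda>y. f y * g y)"
  shows "(\<integral>x. \<phi> x * Gam K f g x \<partial>M)
    = (\<integral>z. \<phi> (fst z) * ((f (snd z) - f (fst z)) * (g (snd z) - g (fst z))) \<partial>joint) / 2"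
proof -
  have [measurable]: "Gam K f g \<in> borel_measurable M"
    using measurable_prob_algebraD[OF kernel] by (rule measurable_Gam) measurable
  have "(\<lambda>z. (f (snd z) - f (fst z)) * (g (snd z) - g (fst z))) \<in> borel_measurable (M \<Otimes>\<^sub>M M)"
    by measurable
  from borel_measurable_integral_kernel[OF measurable_prob_algebraD[OF kernel] this]
  have [measurable]: "(\<lambda>x. \<integral>y. (f y - f x) * (g y - g x) \<partial>K x) \<in> borel_measurable M"
    by simp
  have "AE x in M. Gam K f g x = (\<integral>y. (f y - f x) * (g y - g x) \<partial>K x) / 2"
    using int_kernel AE_space
    by eventually_elim (simp add: Gam_eq_integral_increments prob_space_kernel)
  then have "(\<integral>x. \<phi> x * Gam K f g x \<partial>M)
      = (\<integral>x. \<phi> x * (\<integral>y. (f y - f x) * (g y - g x) \<partial>K x) / 2 \<partial>M)"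
    by (intro integral_cong_AE) (measurable, auto elim!: eventually_mono)
  then show ?thesis
    by (simp add: integral_joint_disintegration[OF int])
qed

end

locale exchangeable_pair_L4 = exchangeable_pair P M X X' K
  for P :: "'b measure" and M :: "'a measure" and X X' :: "'b \<Rightarrow> 'a" and K :: "'a \<Rightarrow> 'a measure" +
  fixes F :: "'a \<Rightarrow> real"
  assumes measurable_F[measurable]: "F \<in> borel_measurable M"
    and integrable_F4: "integrable M (\<lambda>x. F x ^ 4)"
begin

definition monomial :: "nat \<Rightarrow> nat \<Rightarrow> 'a \<times> 'a \<Rightarrow> real" where
  "monomial i j z = F (fst z) ^ i * F (snd z) ^ j"

definition mixed_moment :: "nat \<Rightarrow> nat \<Rightarrow> real" where
  "mixed_moment i j = (\<integral>z. monomial i j z \<partial>joint)"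

lemma measurable_monomial[measurable]: "monomial i j \<in> borel_measurable (M \<Otimes>\<^sub>M M)"
  unfolding monomial_def[abs_def] by measurable

lemma measurable_F4: "(\<lambda>x. F x ^ 4) \<in> borel_measurable M"
  by measurable

lemma integrable_monomial[simp]:
  assumes "i + j = 4"
  shows "integrable joint (monomial i j)"
proof (rule Bochner_Integration.integrable_bound)
  have "integrable joint (monomial 4 0)"
    using integrable_F4 by (simp add: monomial_def[abs_def] integrable_joint_fst[OF measurable_F4])
  moreover from this have "integrable joint (monomial 0 4)"
    using integrable_joint_swap[OF measurable_monomial, of 4 0] by (simp add: monomial_def[abs_def])
  ultimately show "integrable joint (\<lambda>z. monomial 4 0 z + monomial 0 4 z)"
    by simp
  show "AE z in joint. norm (monomial i j z) \<le> norm (monomial 4 0 z + monomial 0 4 z)"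
    using abs_mult_power_le_sum_power[OF assms] by (simp add: monomial_def)
qed simp

lemma mixed_moment_swap: "mixed_moment i j = mixed_moment j i"
  using integral_joint_swap[OF measurable_monomial, of j i]
  by (simp add: mixed_moment_def monomial_def mult.commute)

lemma AE_integrable_kernel_power: "AE x in M. \<forall>k \<le> 4. integrable (K x) (\<lambda>y. F y ^ k)"
proof -
  have "integrable joint (monomial 0 4)"
    by simp
  from AE_integrable_kernel[OF this] AE_space show ?thesis
  proof eventually_elim
    case (elim x)
    interpret Kx: prob_space "K x"
      using prob_space_kernel[OF elim(2)] .
    have measurable_F_kernel: "F \<in> borel_measurable (K x)"
      by (simp add: measurable_cong_sets[OF sets_kernel_eq[OF elim(2)] refl])
    have "integrable (K x) (\<lambda>y. \<bar>F y\<bar> ^ 4)"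
      using elim(1) by (simp add: monomial_def)
    then show ?case
      by (blast intro: Kx.integrable_power_le[OF measurable_F_kernel])
  qed
qed

lemma integral_increment_fourth_power:
  "(\<integral>\<omega>. (F (X' \<omega>) - F (X \<omega>)) ^ 4 \<partial>P)
    = 2 * mixed_moment 4 0 - 8 * mixed_moment 3 1 + 6 * mixed_moment 2 2"
proof -
  have "(\<lambda>z. (F (snd z) - F (fst z)) ^ 4)
      = (\<lambda>z. monomial 0 4 z - 4 * monomial 1 3 z + 6 * monomial 2 2 z
          - 4 * monomial 3 1 z + monomial 4 0 z)"
    by (auto simp: fun_eq_iff monomial_def) algebra
  then have "(\<integral>z. (F (snd z) - F (fst z)) ^ 4 \<partial>joint)
      = mixed_moment 0 4 - 4 * mixed_moment 1 3 + 6 * mixed_moment 2 2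
        - 4 * mixed_moment 3 1 + mixed_moment 4 0"
    by (simp add: mixed_moment_def)
  then show ?thesis
    using mixed_moment_swap[of 0 4] mixed_moment_swap[of 1 3] by (simp add: integral_distr)
qed

lemma integral_cube_mult_Lgen:
  "(\<integral>x. F x ^ 3 * Lgen K F x \<partial>M) = mixed_moment 3 1 - mixed_moment 4 0"
proof -
  have eq: "(\<lambda>z. F (fst z) ^ 3 * (F (snd z) - F (fst z))) = (\<lambda>z. monomial 3 1 z - monomial 4 0 z)"
    by (auto simp: fun_eq_iff monomial_def) algebra
  have "integrable joint (\<lambda>z. F (fst z) ^ 3 * (F (snd z) - F (fst z)))"
    unfolding eq by simp
  then show ?thesis
    by (simp add: integral_mult_Lgen eq mixed_moment_def)
qed

lemma integral_square_mult_Gam: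
  "(\<integral>x. F x ^ 2 * Gam K F F x \<partial>M)
    = (mixed_moment 2 2 - 2 * mixed_moment 3 1 + mixed_moment 4 0) / 2"
proof -
  have eq: "(\<lambda>z. F (fst z) ^ 2 * ((F (snd z) - F (fst z)) * (F (snd z) - F (fst z))))
      = (\<lambda>z. monomial 2 2 z - 2 * monomial 3 1 z + monomial 4 0 z)"
    by (auto simp: fun_eq_iff monomial_def) algebra
  have "integrable joint (\<lambda>z. F (fst z) ^ 2 * ((F (snd z) - F (fst z)) * (F (snd z) - F (fst z))))"
    unfolding eq by simp
  moreover have
    "AE x in M. integrable (K x) F \<and> integrable (K x) F \<and> integrable (K x) (\<lambda>y. F y * F y)"
    using AE_integrable_kernel_power
    by eventually_elim (auto dest: spec[of _ 1] spec[of _ 2] simp: power2_eq_square)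
  ultimately show ?thesis
    by (subst integral_mult_Gam) (simp_all add: eq mixed_moment_def)
qed

lemma integral_Gam_cube:
  "(\<integral>x. Gam K (\<lambda>y. F y ^ 3) F x \<partial>M) = mixed_moment 4 0 - mixed_moment 3 1"
proof -
  have eq: "(\<lambda>z. (F (snd z) ^ 3 - F (fst z) ^ 3) * (F (snd z) - F (fst z)))
      = (\<lambda>z. monomial 0 4 z - monomial 1 3 z - monomial 3 1 z + monomial 4 0 z)"
    by (auto simp: fun_eq_iff monomial_def) algebra
  have "integrable joint (\<lambda>z. (F (snd z) ^ 3 - F (fst z) ^ 3) * (F (snd z) - F (fst z)))"
    unfolding eq by simp
  moreover have "AE x in M. integrable (K x) (\<lambda>y. F y ^ 3) \<and> integrable (K x) F
      \<and> integrable (K x) (\<lambda>y. F y ^ 3 * F y)"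
    using AE_integrable_kernel_power
    by eventually_elim
      (auto dest: spec[of _ 1] spec[of _ 3] spec[of _ 4] simp: power_Suc2[symmetric] simp del: power_Suc)
  ultimately have "(\<integral>x. 1 * Gam K (\<lambda>y. F y ^ 3) F x \<partial>M)
      = (mixed_moment 0 4 - mixed_moment 1 3 - mixed_moment 3 1 + mixed_moment 4 0) / 2"
    by (subst integral_mult_Gam) (simp_all add: eq mixed_moment_def)
  then show ?thesis
    using mixed_moment_swap[of 0 4] mixed_moment_swap[of 1 3] by simp
qed

lemma integral_cube_mult_Lgen_eigenfunction:
  assumes "AE x in M. Lgen K F x = - lam * F x"
  shows "(\<integral>x. F x ^ 3 * Lgen K F x \<partial>M) = - lam * (\<integral>x. F x ^ 4 \<partial>M)"
proof -
  note [measurable] = measurable_Lgen[OF measurable_prob_algebraD[OF kernel] measurable_F]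
  have "(\<integral>x. F x ^ 3 * Lgen K F x \<partial>M) = (\<integral>x. - lam * F x ^ 4 \<partial>M)"
    using assms
    by (intro integral_cong_AE) (measurable, auto elim!: eventually_mono simp: eval_nat_numeral)
  then show ?thesis
    by simp
qed

end

theorem lemma2p6:
  fixes P :: "'b measure" and M :: "'a measure"
    and X X' :: "'b \<Rightarrow> 'a" and K :: "'a \<Rightarrow> 'a measure" and F :: "'a \<Rightarrow> real"
  assumes "prob_space P"
    and "X \<in> measurable P M" and "X' \<in> measurable P M"
    and "distr P M X = M"
    and exch: "distr P (M \<Otimes>\<^sub>M M) (\<lambda>\<omega>. (X \<omega>, X' \<omega>)) = distr P (M \<Otimes>\<^sub>M M) (\<lambda>\<omega>. (X' \<omega>, X \<omega>))"
    and K_meas: "K \<in> M \<rightarrow>\<^sub>M prob_algebra M"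
    and K_rcd: "distr P (M \<Otimes>\<^sub>M M) (\<lambda>\<omega>. (X \<omega>, X' \<omega>))
                 = M \<bind> (\<lambda>x. K x \<bind> (\<lambda>y. return (M \<Otimes>\<^sub>M M) (x, y)))"
    and F_meas: "F \<in> borel_measurable M"
    and F_L4: "integrable M (\<lambda>x. (F x) ^ 4)"
  shows "(\<integral>\<omega>. (F (X' \<omega>) - F (X \<omega>)) ^ 4 \<partial>P)
           = 4 * ((\<integral>x. (F x) ^ 3 * Lgen K F x \<partial>M) + 3 * (\<integral>x. (F x) ^ 2 * Gam K F F x \<partial>M))
       \<and> (\<integral>\<omega>. (F (X' \<omega>) - F (X \<omega>)) ^ 4 \<partial>P)
           = 4 * (3 * (\<integral>x. (F x) ^ 2 * Gam K F F x \<partial>M) - (\<integral>x. Gam K (\<lambda>y. (F y) ^ 3) F x \<partial>M))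
       \<and> (\<forall>lam::real. lam > 0 \<longrightarrow> (AE x in M. Lgen K F x = - lam * F x) \<longrightarrow>
            (\<integral>\<omega>. (F (X' \<omega>) - F (X \<omega>)) ^ 4 \<partial>P)
              = 4 * lam * (3 * (\<integral>x. (F x) ^ 2 * (inverse lam * Gam K F F x) \<partial>M) - (\<integral>x. (F x) ^ 4 \<partial>M)))"
proof -
  interpret exchangeable_pair_L4 P M X X' K F
    by (intro exchangeable_pair_L4.intro exchangeable_pair.intro exchangeable_pair_axioms.intro
        exchangeable_pair_L4_axioms.intro assms)
  have via_Lgen: "(\<integral>\<omega>. (F (X' \<omega>) - F (X \<omega>)) ^ 4 \<partial>P)
      = 4 * ((\<integral>x. F x ^ 3 * Lgen K F x \<partial>M) + 3 * (\<integral>x. F x ^ 2 * Gam K F F x \<partial>M))"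
    unfolding integral_increment_fourth_power integral_cube_mult_Lgen integral_square_mult_Gam
    by (simp add: field_simps)
  moreover have "(\<integral>\<omega>. (F (X' \<omega>) - F (X \<omega>)) ^ 4 \<partial>P)
      = 4 * (3 * (\<integral>x. F x ^ 2 * Gam K F F x \<partial>M) - (\<integral>x. Gam K (\<lambda>y. F y ^ 3) F x \<partial>M))"
    unfolding integral_increment_fourth_power integral_square_mult_Gam integral_Gam_cube
    by (simp add: field_simps)
  moreover have "(\<integral>\<omega>. (F (X' \<omega>) - F (X \<omega>)) ^ 4 \<partial>P)
      = 4 * lam * (3 * (\<integral>x. F x ^ 2 * (inverse lam * Gam K F F x) \<partial>M) - (\<integral>x. F x ^ 4 \<partial>M))"
    if "lam > 0" and "AE x in M. Lgen K F x = - lam * F x" for lam :: real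
  proof -
    have "(\<integral>x. F x ^ 2 * (inverse lam * Gam K F F x) \<partial>M)
        = inverse lam * (\<integral>x. F x ^ 2 * Gam K F F x \<partial>M)"
      by (simp add: mult.left_commute)
    then show ?thesis
      unfolding via_Lgen integral_cube_mult_Lgen_eigenfunction[OF that(2)] using that(1)
      by (simp add: field_simps)
  qed
  ultimately show ?thesis
    by blast
qed

end
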